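(* Let $K\ge1$, $a>0$, $N\ge2$, $B>0$, let $J\subset\mathbb R$ be a bounded interval, $\xi_J\in\mathbb R$, and $\omega_J$ an interval of length $|J|^{-1}$ containing $\xi_J$. Let $\phi_J$ be a smooth function with $\mathrm{supp}\,\phi_J\subset u(K)J$ and $|\widehat{\phi_J}(\zeta)|\le Be^{-aK/12}|J|^{1/2}(|J||\zeta-\xi_J|)^{-N}$ for all $|\zeta-\xi_J|\ge2|J|^{-1}$. Set $\Xi(J)=5\omega_J\cap\frac{1}{3u(K)|J|}\mathbb Z$. If $h\in L^1(\mathbb R)$ is supported in $3u(K)J$ and satisfies $\int_{\mathbb R}h(x)e^{-2\pi i\zeta x}dx=0$ for all $\zeta\in\Xi(J)$, then $$|\langle h,|J|^{1/2}\phi_J\rangle|\le C e^{-aK/12}\|h\|_1,$$ with $C$ depending only on $B$ and $N$.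
   Context: $u:[0,\infty)\to(0,\infty)$ is an increasing function (with $u(K)\ge1$ in the relevant range). For an interval $I$ and $c>0$, $cI$ is the interval with the same center and length $c|I|$. $\langle f,g\rangle=\int f\overline g$. $\widehat f(\xi)=\int f(x)e^{-2\pi ix\xi}dx$. *)

theory Defs
  imports "HOL-Analysis.Analysis"
begin

definition bdd_interval :: "real set \<Rightarrow> bool" where
  "bdd_interval I \<longleftrightarrow> is_interval I \<and> bounded I \<and> I \<noteq> {} \<and> Inf I < Sup I"

definition ilen :: "real set \<Rightarrow> real" where
  "ilen I = Sup I - Inf I"

definition icenter :: "real set \<Rightarrow> real" where
  "icenter I = (Sup I + Inf I) / 2"

definition iscale :: "real \<Rightarrow> real set \<Rightarrow> real set" where
  "iscale c I = {icenter I - c * ilen I / 2 .. icenter I + c * ilen I / 2}"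

definition fourier :: "(real \<Rightarrow> complex) \<Rightarrow> real \<Rightarrow> complex" where
  "fourier f \<xi> = (LINT x|lborel. f x * cis (- 2 * pi * x * \<xi>))"

definition inner_L2 :: "(real \<Rightarrow> complex) \<Rightarrow> (real \<Rightarrow> complex) \<Rightarrow> complex" where
  "inner_L2 f g = (LINT x|lborel. f x * cnj (g x))"

definition L1_norm :: "(real \<Rightarrow> complex) \<Rightarrow> real" where
  "L1_norm f = (LINT x|lborel. norm (f x))"

definition supp :: "(real \<Rightarrow> complex) \<Rightarrow> real set" where
  "supp f = closure {x. f x \<noteq> 0}"

fun vderiv_iter :: "nat \<Rightarrow> (real \<Rightarrow> complex) \<Rightarrow> real \<Rightarrow> complex" where
  "vderiv_iter 0 f = f"
| "vderiv_iter (Suc n) f = (\<lambda>x. vector_derivative (vderiv_iter n f) (at x))"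

definition smooth :: "(real \<Rightarrow> complex) \<Rightarrow> bool" where
  "smooth f \<longleftrightarrow> (\<forall>n x. vderiv_iter n f differentiable at x)"

end

theory Submission
  imports Defs "HOL-Library.Nat_Bijection"
begin

text \<open>Let \<open>L = 3 u(K) |J|\<close>. Since \<open>\<phi>\<^sub>J\<close> is supported well inside the period interval \<open>I\<close> of
  length \<open>L\<close> centred with \<open>J\<close> and its Fourier transform decays, \<open>\<phi>\<^sub>J\<close> agrees a.e. on \<open>I\<close> with its
  absolutely convergent Fourier series \<open>\<Sum>\<^sub>k L\<^sup>-\<^sup>1 fourier \<phi>\<^sub>J (k/L) cis (2\<pi>kx/L)\<close>. As \<open>h\<close> is supported
  in \<open>I\<close>, \<open>\<langle>h, \<phi>\<^sub>J\<rangle>\<close> becomes \<open>L\<^sup>-\<^sup>1 \<Sum>\<^sub>k fourier h (k/L) \<cdot> cnj (fourier \<phi>\<^sub>J (k/L))\<close>. The frequencies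
  within \<open>2/|J|\<close> of \<open>\<xi>\<^sub>J\<close> lie in \<open>5\<omega>\<^sub>J\<close>, where \<open>fourier h\<close> vanishes; for the others one uses
  \<open>|fourier h| \<le> \<parallel>h\<parallel>\<^sub>1\<close> and the decay of \<open>fourier \<phi>\<^sub>J\<close>, and the points \<open>|J|(k/L - \<xi>\<^sub>J)\<close> form a
  lattice of spacing \<open>s = |J|/L \<le> 1/3\<close>, whose points of modulus \<open>\<ge> 2\<close> have \<open>\<Sum> |t|\<^sup>-\<^sup>N \<le> 2/s\<close>.
  This gives \<open>C = 2B\<close>. The Fourier inversion rests on uniqueness: a function on \<open>I\<close> orthogonal to
  all exponentials \<open>cis (2\<pi>kx/L)\<close> is orthogonal to \<open>\<phi>\<^sub>J\<close> (Stone-Weierstrass on the unit circle)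
  and to the series.\<close>

section \<open>Lattice sums\<close>

lemma sum_inverse_square_progression_le:
  fixes s t :: real
  assumes "0 < s" "s < t"
  shows "(\<Sum>j<n. s / (t + real j * s)^2) \<le> 1/(t - s) - 1/(t + (real n - 1) * s)"
proof (induction n)
  case 0 then show ?case by simp
next
  case (Suc n)
  have ns: "0 \<le> real n * s" using assms by simp
  have e: "t + (real n - 1) * s = (t - s) + real n * s" by (simp add: algebra_simps)
  have p1: "t + (real n - 1) * s > 0" and p2: "t + real n * s > 0"
    unfolding e using assms ns by linarith+
  have "(t + (real n - 1) * s) * (t + real n * s) \<le> (t + real n * s)^2"
    unfolding power2_eq_square using p2 assms by (intro mult_right_mono) auto
  then have "s / (t + real n * s)^2 \<le> s / ((t + (real n - 1) * s) * (t + real n * s))"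
    using p1 p2 assms by (intro divide_left_mono) auto
  also have "\<dots> = 1/(t + (real n - 1) * s) - 1/(t + real n * s)"
    using p1 p2 by (simp add: field_simps)
  finally show ?case using Suc by (simp add: algebra_simps)
qed

text \<open>Points of the lattice \<open>s\<int> - y\<close> to the right of \<open>2\<close>, compared with \<open>\<integral> dt/t\<^sup>2\<close>.\<close>
lemma sum_lattice_inverse_square_le:
  fixes s y :: real
  assumes s: "0 < s" "s \<le> 1/3" and S: "finite S" and far: "\<forall>k\<in>S. real_of_int k * s - y \<ge> 2"
  shows "(\<Sum>k\<in>S. s / (real_of_int k * s - y)^2) \<le> 1"
proof (cases "S = {}")
  case False
  define k0 where "k0 = Min S"
  define t where "t = real_of_int k0 * s - y"
  define n where "n = Suc (nat (Max S - k0))"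
  have t: "t \<ge> 2" using far False S by (simp add: t_def k0_def)
  have "S \<subseteq> (\<lambda>j. k0 + int j) ` {..<n}"
  proof
    fix k assume k: "k \<in> S"
    then have "k0 \<le> k" "k \<le> Max S" using S by (auto simp: k0_def)
    then have "k = k0 + int (nat (k - k0))" "nat (k - k0) < n" by (auto simp: n_def)
    then show "k \<in> (\<lambda>j. k0 + int j) ` {..<n}" by blast
  qed
  then have "(\<Sum>k\<in>S. s / (real_of_int k * s - y)^2)
      \<le> (\<Sum>k\<in>(\<lambda>j. k0 + int j) ` {..<n}. s / (real_of_int k * s - y)^2)"
    using s by (intro sum_mono2) auto
  also have "\<dots> = (\<Sum>j<n. s / (t + real j * s)^2)"
    by (subst sum.reindex) (auto simp: inj_on_def t_def algebra_simps)
  also have "\<dots> \<le> 1/(t - s) - 1/(t + (real n - 1) * s)"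
    using sum_inverse_square_progression_le[of s t n] s t by simp
  also have "\<dots> \<le> 1/(t - s)"
  proof -
    have "0 \<le> real n * s" using s by simp
    moreover have "t + (real n - 1) * s = (t - s) + real n * s" by (simp add: algebra_simps)
    ultimately have "0 < t + (real n - 1) * s" using s t by linarith
    then show ?thesis by simp
  qed
  also have "\<dots> \<le> 1" using s t by (simp add: divide_simps)
  finally show ?thesis .
qed simp

definition lattice_decay :: "real \<Rightarrow> real \<Rightarrow> real \<Rightarrow> int \<Rightarrow> real" where
  "lattice_decay s y N k =
     (if 2 \<le> \<bar>of_int k * s - y\<bar> then \<bar>of_int k * s - y\<bar> powr (-N) else 0)"

lemma lattice_decay_nonneg: "lattice_decay s y N k \<ge> 0"
  by (simp add: lattice_decay_def)

lemma sum_lattice_decay_le: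
  fixes s y N :: real
  assumes s: "0 < s" "s \<le> 1/3" and N: "N \<ge> 2" and S: "finite S"
  shows "(\<Sum>k\<in>S. lattice_decay s y N k) \<le> 2 / s"
proof -
  define d where "d k = real_of_int k * s - y" for k
  let ?P = "{k\<in>S. d k \<ge> 2}" and ?M = "{k\<in>S. d k \<le> -2}"
  have pw: "s * lattice_decay s y N k \<le> (if k \<in> ?P \<union> ?M then s / (d k)^2 else 0)" if "k \<in> S" for k
  proof (cases "2 \<le> \<bar>d k\<bar>")
    case True
    have "\<bar>d k\<bar> powr (-N) \<le> \<bar>d k\<bar> powr (-2)" using True N by (intro powr_mono) auto
    also have "\<dots> = 1 / (d k)^2" using True by (simp add: powr_minus powr_numeral inverse_eq_divide)
    finally show ?thesis
      using True s that by (auto simp: lattice_decay_def d_def divide_simps mult_left_mono)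
  qed (auto simp: lattice_decay_def d_def)
  have "s * (\<Sum>k\<in>S. lattice_decay s y N k) \<le> (\<Sum>k\<in>S. if k \<in> ?P \<union> ?M then s / (d k)^2 else 0)"
    unfolding sum_distrib_left using pw by (rule sum_mono)
  also have "\<dots> = (\<Sum>k\<in>?P \<union> ?M. s / (d k)^2)"
    using S by (intro sum.mono_neutral_cong_right) auto
  also have "\<dots> = (\<Sum>k\<in>?P. s / (d k)^2) + (\<Sum>k\<in>?M. s / (d k)^2)"
    using S by (intro sum.union_disjoint) auto
  also have "(\<Sum>k\<in>?P. s / (d k)^2) \<le> 1"
    unfolding d_def using S s by (intro sum_lattice_inverse_square_le) auto
  also have "(\<Sum>k\<in>?M. s / (d k)^2) = (\<Sum>k\<in>uminus ` ?M. s / (real_of_int k * s - (-y))^2)"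
    by (subst sum.reindex) (auto simp: inj_on_def d_def power2_commute algebra_simps intro!: sum.cong)
  also have "\<dots> \<le> 1"
    using S s by (intro sum_lattice_inverse_square_le) (auto simp: d_def)
  finally show ?thesis using s by (simp add: field_simps)
qed

lemma summable_lattice_decay:
  fixes s y N :: real
  assumes "0 < s" "s \<le> 1/3" "N \<ge> 2"
  shows "summable (\<lambda>n. lattice_decay s y N (int_decode n))"
    and "(\<Sum>n. lattice_decay s y N (int_decode n)) \<le> 2 / s"
proof -
  have bound: "(\<Sum>n<m. lattice_decay s y N (int_decode n)) \<le> 2 / s" for m
    using sum_lattice_decay_le[OF assms, of "int_decode ` {..<m}" y]
    by (simp add: sum.reindex[OF inj_int_decode])
  show "summable (\<lambda>n. lattice_decay s y N (int_decode n))"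
    using bound by (intro summableI_nonneg_bounded lattice_decay_nonneg)
  then show "(\<Sum>n. lattice_decay s y N (int_decode n)) \<le> 2 / s"
    using bound by (rule suminf_le_const)
qed

section \<open>Trigonometric polynomials\<close>

definition trig_polynomial :: "real \<Rightarrow> (real \<Rightarrow> complex) \<Rightarrow> bool" where
  "trig_polynomial w F \<longleftrightarrow>
     (\<exists>cs::(int \<times> complex) list. \<forall>x. F x = (\<Sum>(k, c)\<leftarrow>cs. c * cis (w * of_int k * x)))"

lemma trig_polynomial_const: "trig_polynomial w (\<lambda>x. c)"
  unfolding trig_polynomial_def by (rule exI[of _ "[(0, c)]"]) simp

lemma trig_polynomial_add:
  assumes "trig_polynomial w F" "trig_polynomial w G"
  shows "trig_polynomial w (\<lambda>x. F x + G x)"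
proof -
  obtain cs ds where "\<forall>x. F x = (\<Sum>(k, c)\<leftarrow>cs. c * cis (w * of_int k * x))"
    and "\<forall>x. G x = (\<Sum>(k, c)\<leftarrow>ds. c * cis (w * of_int k * x))"
    using assms unfolding trig_polynomial_def by blast
  then have "\<forall>x. F x + G x = (\<Sum>(k, c)\<leftarrow>cs @ ds. c * cis (w * of_int k * x))" by simp
  then show ?thesis unfolding trig_polynomial_def by blast
qed

lemma trig_polynomial_mult_monomial:
  assumes "trig_polynomial w F"
  shows "trig_polynomial w (\<lambda>x. d * cis (w * of_int j * x) * F x)"
proof -
  obtain cs where F: "\<forall>x. F x = (\<Sum>(k, c)\<leftarrow>cs. c * cis (w * of_int k * x))"
    using assms unfolding trig_polynomial_def by blast
  have "d * cis (w * of_int j * x) * (\<Sum>(k, c)\<leftarrow>cs. c * cis (w * of_int k * x))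
      = (\<Sum>(k, c)\<leftarrow>map (\<lambda>(k, c). (j + k, d * c)) cs. c * cis (w * of_int k * x))" for x
  proof (induction cs)
    case (Cons kc cs)
    obtain k c where kc: "kc = (k, c)" by force
    have "cis (w * of_int (j + k) * x) = cis (w * of_int j * x) * cis (w * of_int k * x)"
      by (simp add: cis_mult algebra_simps)
    then show ?case using Cons by (simp add: kc algebra_simps)
  qed simp
  then show ?thesis using F unfolding trig_polynomial_def by metis
qed

lemma trig_polynomial_mult:
  assumes F: "trig_polynomial w F" and G: "trig_polynomial w G"
  shows "trig_polynomial w (\<lambda>x. F x * G x)"
proof -
  obtain cs where "\<forall>x. F x = (\<Sum>(k, c)\<leftarrow>cs. c * cis (w * of_int k * x))"
    using F unfolding trig_polynomial_def by blast
  moreover have "trig_polynomial w (\<lambda>x. (\<Sum>(k, c)\<leftarrow>cs. c * cis (w * of_int k * x)) * G x)"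
  proof (induction cs)
    case Nil then show ?case using trig_polynomial_const[of w 0] by simp
  next
    case (Cons kc cs)
    obtain k c where kc: "kc = (k, c)" by force
    have "trig_polynomial w (\<lambda>x. c * cis (w * of_int k * x) * G x
        + (\<Sum>(k, c)\<leftarrow>cs. c * cis (w * of_int k * x)) * G x)"
      by (intro trig_polynomial_add trig_polynomial_mult_monomial Cons G)
    then show ?case by (simp add: kc algebra_simps)
  qed
  ultimately show ?thesis by simp
qed

lemma trig_polynomial_cis: "trig_polynomial w (\<lambda>x. cis (of_int k * (w * (x - c0))))"
proof -
  have "cis (of_int k * (w * (x - c0))) = cis (- (of_int k * w * c0)) * cis (w * of_int k * x)" for x
    by (simp add: cis_mult algebra_simps)
  then show ?thesis unfolding trig_polynomial_def
    by (intro exI[of _ "[(k, cis (- (of_int k * w * c0)))]"]) simp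
qed

lemma trig_polynomial_cos: "trig_polynomial w (\<lambda>x. complex_of_real (cos (w * (x - c0))))"
proof -
  have "complex_of_real (cos t) = (cis (of_int 1 * t) + cis (of_int (-1) * t)) * (1/2)" for t
    by (simp add: complex_eq_iff)
  then show ?thesis
    by (simp only:) (intro trig_polynomial_mult trig_polynomial_add trig_polynomial_cis trig_polynomial_const)
qed

lemma trig_polynomial_sin: "trig_polynomial w (\<lambda>x. complex_of_real (sin (w * (x - c0))))"
proof -
  have "complex_of_real (sin t) = (cis (of_int 1 * t) + (-1) * cis (of_int (-1) * t)) * (1/(2*\<i>))" for t
    by (simp add: complex_eq_iff)
  then show ?thesis
    by (simp only:) (intro trig_polynomial_mult trig_polynomial_add trig_polynomial_cis trig_polynomial_const)
qed

lemma trig_polynomial_real_polynomial_function: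
  fixes q :: "complex \<Rightarrow> real"
  assumes "real_polynomial_function q"
  shows "trig_polynomial w (\<lambda>x. complex_of_real (q (cis (w * (x - c0)))))"
  using assms
proof (induction q rule: real_polynomial_function.induct)
  case (linear f)
  have lin: "f z = Re z * f 1 + Im z * f \<i>" for z
  proof -
    have "f z = f (Re z *\<^sub>R 1 + Im z *\<^sub>R \<i>)" by (rule arg_cong[of _ _ f]) (simp add: complex_eq_iff)
    also have "\<dots> = Re z * f 1 + Im z * f \<i>"
      using bounded_linear.linear[OF linear] by (simp add: linear_add linear_scale)
    finally show ?thesis .
  qed
  have "complex_of_real (f (cis t)) = of_real (cos t) * of_real (f 1) + of_real (sin t) * of_real (f \<i>)" for t
    using lin[of "cis t"] by simp
  then show ?case
    by (simp only:) (intro trig_polynomial_add trig_polynomial_mult trig_polynomial_cos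
        trig_polynomial_sin trig_polynomial_const)
qed (simp_all add: trig_polynomial_const trig_polynomial_add trig_polynomial_mult)

lemma trig_polynomial_polynomial_function:
  fixes p :: "complex \<Rightarrow> complex"
  assumes "polynomial_function p"
  shows "trig_polynomial w (\<lambda>x. p (cis (w * (x - c0))))"
proof -
  have "real_polynomial_function (Re \<circ> p)" "real_polynomial_function (Im \<circ> p)"
    using assms unfolding polynomial_function_def by (auto intro: bounded_linear_Re bounded_linear_Im)
  then have "trig_polynomial w (\<lambda>x. complex_of_real ((Re \<circ> p) (cis (w * (x - c0))))
      + complex_of_real ((Im \<circ> p) (cis (w * (x - c0)))) * \<i>)"
    by (intro trig_polynomial_add trig_polynomial_mult trig_polynomial_real_polynomial_function
        trig_polynomial_const)
  moreover have "complex_of_real (Re z) + complex_of_real (Im z) * \<i> = z" for z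
    by (simp add: complex_eq_iff)
  ultimately show ?thesis by simp
qed

section \<open>Integrals against exponentials\<close>

lemma integrable_mult_cnj_bounded:
  fixes D \<phi> :: "real \<Rightarrow> complex"
  assumes D: "integrable lborel D" and \<phi>: "\<And>x. isCont \<phi> x" and M: "\<And>x. norm (\<phi> x) \<le> M"
  shows "integrable lborel (\<lambda>x. D x * cnj (\<phi> x))"
proof (rule Bochner_Integration.integrable_bound[OF integrable_mult_right[OF D, of "complex_of_real M"]])
  have "(\<lambda>x. cnj (\<phi> x)) \<in> borel_measurable borel"
    using \<phi> by (intro borel_measurable_continuous_onI continuous_at_imp_continuous_on continuous_intros) auto
  then show "(\<lambda>x. D x * cnj (\<phi> x)) \<in> borel_measurable lborel"
    using D by (simp add: borel_measurable_integrable borel_measurable_times)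
  have "norm (D x) * norm (\<phi> x) \<le> norm (D x) * M" for x using M by (intro mult_left_mono) auto
  then show "AE x in lborel. norm (D x * cnj (\<phi> x)) \<le> norm (complex_of_real M * D x)"
    using order_trans[OF norm_ge_zero M] by (simp add: norm_mult mult.commute)
qed

lemma integrable_mult_cnj_cis:
  fixes D :: "real \<Rightarrow> complex"
  assumes "integrable lborel D"
  shows "integrable lborel (\<lambda>x. D x * cnj (cis (t * x)))"
  using assms by (rule integrable_mult_cnj_bounded)
    (auto simp: cis_conv_exp intro!: continuous_intros)

lemma orthogonal_trig_polynomial:
  fixes D P :: "real \<Rightarrow> complex"
  assumes D: "integrable lborel D"
    and orth: "\<And>k. (LINT x|lborel. D x * cnj (cis (w * of_int k * x))) = 0"
    and P: "trig_polynomial w P"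
  shows "integrable lborel (\<lambda>x. D x * cnj (P x))" and "(LINT x|lborel. D x * cnj (P x)) = 0"
proof -
  obtain cs where "P = (\<lambda>x. \<Sum>(k, c)\<leftarrow>cs. c * cis (w * of_int k * x))"
    using P unfolding trig_polynomial_def by blast
  moreover have "integrable lborel (\<lambda>x. D x * cnj (\<Sum>(k, c)\<leftarrow>cs. c * cis (w * of_int k * x))) \<and>
      (LINT x|lborel. D x * cnj (\<Sum>(k, c)\<leftarrow>cs. c * cis (w * of_int k * x))) = 0"
  proof (induction cs)
    case (Cons kc cs)
    obtain k c where kc: "kc = (k, c)" by force
    have i1: "integrable lborel (\<lambda>x. cnj c * (D x * cnj (cis (w * of_int k * x))))"
      using integrable_mult_cnj_cis[OF D, of "w * of_int k"] by (simp add: mult.assoc)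
    have "D x * cnj (\<Sum>(k, c)\<leftarrow>kc # cs. c * cis (w * of_int k * x)) =
        cnj c * (D x * cnj (cis (w * of_int k * x)))
        + D x * cnj (\<Sum>(k, c)\<leftarrow>cs. c * cis (w * of_int k * x))" for x
      by (simp add: kc distrib_left mult.left_commute)
    then show ?case using Cons i1 orth[of k] by simp
  qed simp
  ultimately show "integrable lborel (\<lambda>x. D x * cnj (P x))" "(LINT x|lborel. D x * cnj (P x)) = 0"
    by simp_all
qed

lemma has_vector_derivative_cis_linear:
  "((\<lambda>x. cis (a * x)) has_vector_derivative (complex_of_real a * \<i> * cis (a * x))) (at x within S)"
proof -
  have "((\<lambda>x. cis (a * x)) has_derivative (\<lambda>t. (a * t) *\<^sub>R (\<i> * cis (a * x)))) (at x within S)"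
    by (rule has_derivative_cis[OF bounded_linear_imp_has_derivative[OF bounded_linear_mult_right]])
  then show ?thesis unfolding has_vector_derivative_def
    by (simp add: scaleR_conv_of_real algebra_simps)
qed

lemma integral_cis_period_interval:
  fixes L c0 :: real and m :: int
  assumes L: "L > 0"
  shows "(LINT x|lborel. indicator {c0 - L/2..c0 + L/2} x *\<^sub>R cis (2*pi/L * of_int m * x))
    = (if m = 0 then complex_of_real L else 0)"
proof (cases "m = 0")
  case True
  have "(LINT x|lborel. indicator {c0 - L/2..c0 + L/2} x *\<^sub>R (1::complex))
      = complex_of_real (c0 + L/2) - complex_of_real (c0 - L/2)"
    using L by (intro integral_FTC_atLeastAtMost) (auto intro!: derivative_eq_intros)
  then show ?thesis using True by simp
next
  case False
  define a where "a = 2*pi/L * of_int m"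
  have a: "a \<noteq> 0" using False L by (simp add: a_def)
  let ?F = "\<lambda>x. cis (a * x) / (complex_of_real a * \<i>)"
  have "(LINT x|lborel. indicator {c0 - L/2..c0 + L/2} x *\<^sub>R cis (a * x))
      = ?F (c0 + L/2) - ?F (c0 - L/2)"
  proof (rule integral_FTC_atLeastAtMost)
    fix x
    have "(?F has_vector_derivative (complex_of_real a * \<i> * cis (a * x)) / (complex_of_real a * \<i>))
        (at x within {c0 - L/2..c0 + L/2})"
      by (rule has_vector_derivative_divide[OF has_vector_derivative_cis_linear])
    then show "(?F has_vector_derivative cis (a * x)) (at x within {c0 - L/2..c0 + L/2})"
      using a by simp
  qed (use L in \<open>auto intro: continuous_intros\<close>)
  also have "\<dots> = 0"
  proof -
    have "cis (a * (c0 + L/2)) = cis (a * (c0 - L/2)) * cis (2 * pi * of_int m)"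
      using L by (simp add: cis_mult a_def field_simps)
    then show ?thesis by simp
  qed
  finally show ?thesis using False by (simp add: a_def)
qed

lemma
  fixes a :: "nat \<Rightarrow> complex" and fr :: "nat \<Rightarrow> real" and Q :: "real \<Rightarrow> complex"
  assumes sa: "summable (\<lambda>n. norm (a n))" and Q: "integrable lborel Q"
  shows integrable_mult_cnj_exp_series: "integrable lborel (\<lambda>x. Q x * cnj (\<Sum>n. a n * cis (fr n * x)))"
    and integral_mult_cnj_exp_series: "(LINT x|lborel. Q x * cnj (\<Sum>n. a n * cis (fr n * x)))
      = (\<Sum>n. cnj (a n) * (LINT x|lborel. Q x * cnj (cis (fr n * x))))"
proof -
  define f where "f n x = cnj (a n) * (Q x * cnj (cis (fr n * x)))" for n x
  have nf: "norm (f n x) = norm (a n) * norm (Q x)" for n x by (simp add: f_def norm_mult)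
  have eq: "Q x * cnj (\<Sum>n. a n * cis (fr n * x)) = (\<Sum>n. f n x)" for x
  proof -
    have "summable (\<lambda>n. a n * cis (fr n * x))"
      by (rule summable_norm_cancel) (simp add: norm_mult sa)
    then have "(\<lambda>n. cnj (a n * cis (fr n * x))) sums cnj (\<Sum>n. a n * cis (fr n * x))"
      by (simp only: sums_cnj summable_sums)
    then have "(\<lambda>n. Q x * cnj (a n * cis (fr n * x))) sums (Q x * cnj (\<Sum>n. a n * cis (fr n * x)))"
      by (rule sums_mult)
    then show ?thesis by (simp add: sums_iff f_def mult.left_commute)
  qed
  have i: "integrable lborel (f n)" for n
    unfolding f_def by (intro integrable_mult_right integrable_mult_cnj_cis Q)
  have s1: "AE x in lborel. summable (\<lambda>n. norm (f n x))"
    by (simp add: nf summable_mult2 sa)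
  have s2: "summable (\<lambda>n. LINT x|lborel. norm (f n x))"
    by (simp add: nf summable_mult2 sa)
  show "integrable lborel (\<lambda>x. Q x * cnj (\<Sum>n. a n * cis (fr n * x)))"
    unfolding eq by (rule integrable_suminf[OF i s1 s2])
  have "integral\<^sup>L lborel (f n) = cnj (a n) * (LINT x|lborel. Q x * cnj (cis (fr n * x)))" for n
    unfolding f_def by simp
  then show "(LINT x|lborel. Q x * cnj (\<Sum>n. a n * cis (fr n * x)))
      = (\<Sum>n. cnj (a n) * (LINT x|lborel. Q x * cnj (cis (fr n * x))))"
    unfolding eq integral_suminf[OF i s1 s2] by simp
qed

section \<open>The period interval as the unit circle\<close>

lemma Arg_abs_gt_near_minus_one:
  assumes z: "norm z = 1" and d: "dist z (-1) < 1"
  shows "2*pi/3 < \<bar>Arg z\<bar>"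
proof (rule ccontr)
  assume "\<not> ?thesis"
  then have "cos (2*pi/3) \<le> cos \<bar>Arg z\<bar>"
    by (intro cos_monotone_0_pi_le) auto
  moreover have "cos (2*pi/3) = -1/2"
    using cos_pi_minus[of "pi/3"] cos_60 by (simp add: field_simps)
  moreover have "cos \<bar>Arg z\<bar> = Re z"
  proof -
    have "z \<noteq> 0" using z by auto
    then have "cis (Arg z) = z" using cis_Arg[of z] z by (simp add: sgn_div_norm)
    then show ?thesis by (metis cis.sel(1) cos_minus abs_if)
  qed
  moreover have "Re z < -1/2"
  proof -
    have "(cmod (z + 1))^2 < 1" using d by (simp add: dist_norm abs_square_less_1)
    then have "(Re z + 1)^2 + (Im z)^2 < 1" by (simp add: cmod_power2)
    moreover have "(Re z)^2 + (Im z)^2 = 1" using z by (simp add: cmod_power2[symmetric])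
    ultimately show ?thesis by (simp add: power2_eq_square algebra_simps)
  qed
  ultimately show False by simp
qed

lemma continuous_on_sphere_compose_Arg:
  fixes \<phi> :: "real \<Rightarrow> complex" and w c0 :: real
  assumes cont: "\<And>x. isCont \<phi> x" and w: "w > 0"
    and zero: "\<And>x. 2*pi/3 < \<bar>(x - c0) * w\<bar> \<Longrightarrow> \<phi> x = 0"
  shows "continuous_on (sphere 0 1) (\<lambda>z. \<phi> (c0 + Arg z / w))"
  unfolding continuous_on_eq_continuous_within
proof
  fix z :: complex assume z: "z \<in> sphere 0 1"
  show "continuous (at z within sphere 0 1) (\<lambda>z. \<phi> (c0 + Arg z / w))"
  proof (cases "z \<in> \<real>\<^sub>\<le>\<^sub>0")
    case False
    have "isCont (\<lambda>z. c0 + Arg z / w) z"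
      using continuous_at_Arg[OF False] w by (intro continuous_intros) auto
    then have "isCont (\<lambda>z. \<phi> (c0 + Arg z / w)) z" using cont by (rule isCont_o2)
    then show ?thesis by (rule continuous_at_imp_continuous_within)
  next
    case True
    then obtain r where "z = of_real r" "r \<le> 0" by (auto simp: nonpos_Reals_def)
    then have "z = -1" using z by simp
    moreover have "continuous (at (-1) within sphere 0 1) (\<lambda>z. \<phi> (c0 + Arg z / w))"
    proof (rule continuous_transform_within[of _ _ "\<lambda>_. 0" 1])
      fix z' :: complex assume "z' \<in> sphere 0 1" "dist z' (-1) < 1"
      then have "2*pi/3 < \<bar>Arg z'\<bar>" by (intro Arg_abs_gt_near_minus_one) auto
      moreover have "(c0 + Arg z' / w - c0) * w = Arg z'" using w by simp
      ultimately have "2*pi/3 < \<bar>(c0 + Arg z' / w - c0) * w\<bar>" by simp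
      then show "0 = \<phi> (c0 + Arg z' / w)" using zero by simp
    qed auto
    ultimately show ?thesis by simp
  qed
qed

lemma compose_Arg_cis_eq:
  fixes \<phi> :: "real \<Rightarrow> complex"
  assumes w: "w > 0" and x: "\<bar>x - c0\<bar> \<le> pi / w"
    and zero: "\<And>x. 2*pi/3 < \<bar>(x - c0) * w\<bar> \<Longrightarrow> \<phi> x = 0"
  shows "\<phi> (c0 + Arg (cis (w * (x - c0))) / w) = \<phi> x"
proof (cases "w * (x - c0) = - pi")
  case False
  have "\<bar>w * (x - c0)\<bar> \<le> pi" using x w by (simp only: abs_mult abs_of_pos) (simp add: field_simps)
  then have "Arg (cis (w * (x - c0))) = w * (x - c0)" using False by (intro Arg_cis) auto
  then show ?thesis using w by simp
next
  case True
  text \<open>Both points are endpoints of the period interval, where \<open>\<phi>\<close> vanishes.\<close>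
  have "cis (w * (x - c0)) = -1" unfolding True by (simp add: complex_eq_iff)
  then have "Arg (cis (w * (x - c0))) = pi" using Arg_of_real[of "-1"] by simp
  moreover have "(x - c0) * w = - pi" using True by (simp add: mult.commute)
  ultimately show ?thesis using w zero[of x] zero[of "c0 + pi / w"] by simp
qed

section \<open>Fourier inversion on a period interval\<close>

lemma continuous_vanishing_outside_bounded:
  fixes \<phi> :: "real \<Rightarrow> 'a::real_normed_vector"
  assumes cont: "\<And>x. isCont \<phi> x" and zero: "\<And>x. r < \<bar>x - c\<bar> \<Longrightarrow> \<phi> x = 0"
  obtains M where "\<And>x. norm (\<phi> x) \<le> M"
proof -
  have "compact (\<phi> ` {c - r..c + r})"
    using cont by (intro compact_continuous_image continuous_at_imp_continuous_on) auto
  then obtain M where M: "\<And>x. x \<in> {c - r..c + r} \<Longrightarrow> norm (\<phi> x) \<le> M"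
    by (meson bounded_iff compact_imp_bounded imageI)
  have "norm (\<phi> x) \<le> max M 0" for x
  proof (cases "x \<in> {c - r..c + r}")
    case False
    then have "r < \<bar>x - c\<bar>" by auto
    then show ?thesis using zero by simp
  qed (use M in force)
  then show ?thesis using that by blast
qed

text \<open>Via \<open>x \<mapsto> cis (2\<pi>(x - c0)/L)\<close>, a function vanishing near the endpoints of the period
  interval is a continuous function on the unit circle, which Stone-Weierstrass approximates
  uniformly by real polynomials in \<open>Re z\<close> and \<open>Im z\<close>, i.e. by trigonometric polynomials.\<close>
lemma trig_polynomial_uniform_approx:
  fixes \<phi> :: "real \<Rightarrow> complex" and L c0 \<epsilon> :: real
  assumes L: "L > 0" and cont: "\<And>x. isCont \<phi> x" and zero: "\<And>x. L/3 < \<bar>x - c0\<bar> \<Longrightarrow> \<phi> x = 0"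
    and \<epsilon>: "\<epsilon> > 0"
  obtains P where "trig_polynomial (2*pi/L) P"
    and "\<And>x. x \<in> {c0 - L/2..c0 + L/2} \<Longrightarrow> norm (\<phi> x - P x) \<le> \<epsilon>"
proof -
  define w where "w = 2*pi/L"
  have w: "w > 0" and Lw: "L/2 = pi/w" using L by (simp_all add: w_def)
  have zero_w: "\<phi> x = 0" if "2*pi/3 < \<bar>(x - c0) * w\<bar>" for x
  proof (rule zero)
    have "2*pi * (1/3) < 2*pi * (\<bar>x - c0\<bar> / L)" using that L by (simp add: abs_mult w_def mult.commute)
    then show "L/3 < \<bar>x - c0\<bar>" using L by (simp add: mult_less_cancel_left_pos field_simps)
  qed
  obtain p where p: "polynomial_function p"
    and pc: "\<forall>z\<in>sphere 0 1. norm (\<phi> (c0 + Arg z / w) - p z) < \<epsilon>"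
    using Stone_Weierstrass_polynomial_function[OF compact_sphere
        continuous_on_sphere_compose_Arg[OF cont w zero_w] \<epsilon>] by blast
  define P where "P x = p (cis (w * (x - c0)))" for x
  have "trig_polynomial w P"
    unfolding P_def by (rule trig_polynomial_polynomial_function[OF p])
  moreover have "norm (\<phi> x - P x) \<le> \<epsilon>" if "x \<in> {c0 - L/2..c0 + L/2}" for x
  proof -
    have "\<bar>x - c0\<bar> \<le> pi / w" using that Lw by (simp add: abs_le_iff)
    then have "\<phi> (c0 + Arg (cis (w * (x - c0))) / w) = \<phi> x"
      by (rule compose_Arg_cis_eq[OF w _ zero_w])
    moreover have "cis (w * (x - c0)) \<in> sphere 0 1" by simp
    ultimately show ?thesis using pc unfolding P_def by (metis less_imp_le)
  qed
  ultimately show ?thesis using that by (simp add: w_def)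
qed

lemma orthogonal_exponentials_imp_orthogonal_continuous:
  fixes D \<phi> :: "real \<Rightarrow> complex" and L c0 :: real
  assumes L: "L > 0" and D: "integrable lborel D"
    and D0: "\<And>x. x \<notin> {c0 - L/2..c0 + L/2} \<Longrightarrow> D x = 0"
    and orth: "\<And>k::int. (LINT x|lborel. D x * cnj (cis (2*pi/L * of_int k * x))) = 0"
    and cont: "\<And>x. isCont \<phi> x" and zero: "\<And>x. L/3 < \<bar>x - c0\<bar> \<Longrightarrow> \<phi> x = 0"
  shows "(LINT x|lborel. D x * cnj (\<phi> x)) = 0"
proof -
  obtain M where "\<And>x. norm (\<phi> x) \<le> M"
    using continuous_vanishing_outside_bounded[OF cont zero] by blast
  then have D\<phi>: "integrable lborel (\<lambda>x. D x * cnj (\<phi> x))"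
    by (rule integrable_mult_cnj_bounded[OF D cont])
  define M0 where "M0 = (LINT x|lborel. norm (D x))"
  have approx: "norm (LINT x|lborel. D x * cnj (\<phi> x)) \<le> \<epsilon> * M0" if \<epsilon>: "\<epsilon> > 0" for \<epsilon>
  proof -
    obtain P where P: "trig_polynomial (2*pi/L) P"
      and close: "\<And>x. x \<in> {c0 - L/2..c0 + L/2} \<Longrightarrow> norm (\<phi> x - P x) \<le> \<epsilon>"
      using trig_polynomial_uniform_approx[OF L cont zero \<epsilon>] by blast
    note DP = orthogonal_trig_polynomial[OF D orth P]
    have "norm (D x * cnj (\<phi> x - P x)) \<le> \<epsilon> * norm (D x)" for x
    proof (cases "x \<in> {c0 - L/2..c0 + L/2}")
      case True
      then show ?thesis using close[of x]
        by (metis complex_mod_cnj mult.commute mult_right_mono norm_ge_zero norm_mult)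
    qed (simp add: D0)
    then have bound: "(LINT x|lborel. norm (D x * cnj (\<phi> x - P x))) \<le> (LINT x|lborel. \<epsilon> * norm (D x))"
      using D\<phi> DP D by (intro integral_mono) (auto simp: algebra_simps)
    have "(LINT x|lborel. D x * cnj (\<phi> x)) = (LINT x|lborel. D x * cnj (\<phi> x - P x))"
      using D\<phi> DP by (simp add: algebra_simps)
    also have "norm \<dots> \<le> (LINT x|lborel. norm (D x * cnj (\<phi> x - P x)))"
      by (rule integral_norm_bound)
    also have "\<dots> \<le> \<epsilon> * M0"
      using bound by (simp add: M0_def)
    finally show ?thesis .
  qed
  have "norm (LINT x|lborel. D x * cnj (\<phi> x)) \<le> 0"
  proof (rule field_le_epsilon)
    fix e :: real assume "e > 0"
    moreover have "M0 \<ge> 0" by (simp add: M0_def)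
    ultimately have "e / (M0 + 1) * M0 \<le> e" by (simp add: field_simps)
    then show "norm (LINT x|lborel. D x * cnj (\<phi> x)) \<le> 0 + e"
      using approx[of "e / (M0 + 1)"] \<open>e > 0\<close> \<open>M0 \<ge> 0\<close> by simp
  qed
  then show ?thesis by simp
qed

lemma integral_mult_cnj_self_eq_0_AE:
  fixes f :: "real \<Rightarrow> complex"
  assumes f: "integrable lborel (\<lambda>x. f x * cnj (f x))" and "(LINT x|lborel. f x * cnj (f x)) = 0"
  shows "AE x in lborel. f x = 0"
proof -
  have sq: "f x * cnj (f x) = complex_of_real ((norm (f x))^2)" for x
    by (rule complex_norm_square[symmetric])
  have "integrable lborel (\<lambda>x. (norm (f x))^2)"
    using integrable_Re[OF f] by (simp add: sq)
  moreover have "(LINT x|lborel. (norm (f x))^2) = 0"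
    using assms integral_Re[OF f] by (simp add: sq)
  ultimately have "AE x in lborel. (norm (f x))^2 = 0"
    by (simp add: integral_nonneg_eq_0_iff_AE)
  then show ?thesis by simp
qed

lemma set_integrable_cis_interval: "set_integrable lborel {a..b} (\<lambda>x. cis (t * x))"
  by (rule borel_integrable_atLeastAtMost') (auto intro: continuous_intros)

lemma integral_exp_series_coefficient:
  fixes a :: "nat \<Rightarrow> complex" and L c0 :: real and k :: int
  assumes L: "L > 0" and sa: "summable (\<lambda>n. norm (a n))"
  shows "(LINT x|lborel. indicator {c0 - L/2..c0 + L/2} x *\<^sub>R cis (2*pi/L * of_int k * x)
      * cnj (\<Sum>n. a n * cis (2*pi/L * of_int (int_decode n) * x))) = L * cnj (a (int_encode k))"
proof -
  define Q where "Q x = indicator {c0 - L/2..c0 + L/2} x *\<^sub>R cis (2*pi/L * of_int k * x)" for x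
  have Q: "integrable lborel Q"
    using set_integrable_cis_interval unfolding Q_def set_integrable_def .
  have "(LINT x|lborel. Q x * cnj (cis (2*pi/L * of_int (int_decode n) * x)))
      = (if n = int_encode k then complex_of_real L else 0)" for n
  proof -
    have "Q x * cnj (cis (2*pi/L * of_int (int_decode n) * x))
        = indicator {c0 - L/2..c0 + L/2} x *\<^sub>R cis (2*pi/L * of_int (k - int_decode n) * x)" for x
      by (simp add: Q_def cis_cnj cis_mult algebra_simps diff_divide_distrib)
    moreover have "k - int_decode n = 0 \<longleftrightarrow> n = int_encode k" by auto
    ultimately show ?thesis using integral_cis_period_interval[OF L, of c0 "k - int_decode n"] by simp
  qed
  then have "(LINT x|lborel. Q x * cnj (\<Sum>n. a n * cis (2*pi/L * of_int (int_decode n) * x)))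
      = (\<Sum>n. if n = int_encode k then cnj (a n) * L else 0)"
    unfolding integral_mult_cnj_exp_series[OF sa Q] by (intro arg_cong[where f = suminf] ext) simp
  also have "\<dots> = L * cnj (a (int_encode k))"
    using sums_unique[OF sums_single, of "\<lambda>n. cnj (a n) * L" "int_encode k"] by (simp add: mult.commute)
  finally show ?thesis by (simp add: Q_def)
qed

lemma integrable_continuous_vanishing_outside:
  fixes \<phi> :: "real \<Rightarrow> complex"
  assumes cont: "\<And>x. isCont \<phi> x" and zero: "\<And>x. x \<notin> {a..b} \<Longrightarrow> \<phi> x = 0"
  shows "integrable lborel \<phi>"
proof -
  have "(\<lambda>x. indicator {a..b} x *\<^sub>R \<phi> x) = \<phi>"
    using zero by (auto simp: fun_eq_iff indicator_def)
  moreover have "set_integrable lborel {a..b} \<phi>"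
    using cont by (intro borel_integrable_atLeastAtMost' continuous_at_imp_continuous_on) auto
  ultimately show ?thesis by (simp add: set_integrable_def)
qed

lemma fourier_series_remainder_orthogonal:
  fixes \<phi> :: "real \<Rightarrow> complex" and L c0 :: real and k :: int
  defines "a \<equiv> \<lambda>n. fourier \<phi> (of_int (int_decode n) / L) / L" and "I \<equiv> {c0 - L/2..c0 + L/2}"
  assumes L: "L > 0" and cont: "\<And>x. isCont \<phi> x" and zero: "\<And>x. x \<notin> I \<Longrightarrow> \<phi> x = 0"
    and sa: "summable (\<lambda>n. norm (a n))"
  shows "(LINT x|lborel. indicator I x *\<^sub>R (\<phi> x - (\<Sum>n. a n * cis (2*pi/L * of_int (int_decode n) * x)))
      * cnj (cis (2*pi/L * of_int k * x))) = 0"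
proof -
  define g where "g x = (\<Sum>n. a n * cis (2*pi/L * of_int (int_decode n) * x))" for x
  define e where "e x = indicator I x *\<^sub>R cis (2*pi/L * of_int k * x)" for x
  have \<phi>: "integrable lborel \<phi>"
    using cont zero unfolding I_def by (rule integrable_continuous_vanishing_outside)
  have e: "integrable lborel e"
    using set_integrable_cis_interval unfolding e_def I_def set_integrable_def .
  have e\<phi>: "e x * cnj (\<phi> x) = cnj (\<phi> x * cis (- 2 * pi * x * (of_int k / L)))" for x
    using zero[of x] by (cases "x \<in> I") (auto simp: e_def cis_cnj mult_ac)
  have "(LINT x|lborel. e x * cnj (\<phi> x)) = cnj (fourier \<phi> (of_int k / L))"
    unfolding e\<phi> fourier_def by (rule Bochner_Integration.integral_cnj)
  moreover have "(LINT x|lborel. e x * cnj (g x)) = cnj (fourier \<phi> (of_int k / L))"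
    unfolding e_def g_def I_def integral_exp_series_coefficient[OF L sa] using L by (simp add: a_def)
  moreover have "integrable lborel (\<lambda>x. e x * cnj (\<phi> x))"
    unfolding e\<phi> using integrable_mult_cnj_cis[OF \<phi>, of "2 * pi * (of_int k / L)"]
    by (intro integrable_cnj) (simp add: cis_cnj mult_ac)
  moreover have "integrable lborel (\<lambda>x. e x * cnj (g x))"
    unfolding g_def using e by (rule integrable_mult_cnj_exp_series[OF sa])
  ultimately have "(LINT x|lborel. e x * cnj (\<phi> x - g x)) = 0"
    by (simp add: algebra_simps)
  moreover have "(LINT x|lborel. indicator I x *\<^sub>R (\<phi> x - g x) * cnj (cis (2*pi/L * of_int k * x)))
      = cnj (LINT x|lborel. e x * cnj (\<phi> x - g x))"
    unfolding Bochner_Integration.integral_cnj[symmetric] by (simp add: e_def mult.commute)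
  ultimately show ?thesis by (simp add: g_def)
qed

lemma fourier_series_AE_eq:
  fixes \<phi> :: "real \<Rightarrow> complex" and L c0 :: real
  defines "a \<equiv> \<lambda>n. fourier \<phi> (of_int (int_decode n) / L) / L"
  assumes L: "L > 0" and cont: "\<And>x. isCont \<phi> x" and zero: "\<And>x. L/3 < \<bar>x - c0\<bar> \<Longrightarrow> \<phi> x = 0"
    and sa: "summable (\<lambda>n. norm (a n))"
  shows "AE x in lborel. x \<in> {c0 - L/2..c0 + L/2} \<longrightarrow>
    \<phi> x = (\<Sum>n. a n * cis (2*pi/L * of_int (int_decode n) * x))"
proof -
  define I where "I = {c0 - L/2..c0 + L/2}"
  define g where "g x = (\<Sum>n. a n * cis (2*pi/L * of_int (int_decode n) * x))" for x
  define D where "D x = indicator I x *\<^sub>R (\<phi> x - g x)" for x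
  have zero_I: "\<phi> x = 0" if "x \<notin> I" for x
    using that L by (intro zero) (auto simp: I_def abs_if)
  have "integrable lborel (\<lambda>x. indicator I x *\<^sub>R cis (0 * x) * cnj (g x))"
    unfolding g_def using set_integrable_cis_interval[of _ _ 0]
    by (intro integrable_mult_cnj_exp_series[OF sa]) (simp add: set_integrable_def I_def)
  from integrable_cnj[OF this] have "integrable lborel (\<lambda>x. indicator I x *\<^sub>R g x)" by simp
  moreover have "integrable lborel \<phi>"
    using cont zero_I unfolding I_def by (rule integrable_continuous_vanishing_outside)
  moreover have "D = (\<lambda>x. \<phi> x - indicator I x *\<^sub>R g x)"
    using zero_I by (auto simp: D_def scaleR_diff_right fun_eq_iff indicator_def)
  ultimately have D: "integrable lborel D" by simp
  have orth: "(LINT x|lborel. D x * cnj (cis (2*pi/L * of_int k * x))) = 0" for k :: int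
    unfolding D_def g_def I_def a_def
    using fourier_series_remainder_orthogonal[OF L cont zero_I[unfolded I_def] sa[unfolded a_def]] .
  have "D x = 0" if "x \<notin> I" for x using that by (simp add: D_def)
  then have "(LINT x|lborel. D x * cnj (\<phi> x)) = 0"
    unfolding I_def by (rule orthogonal_exponentials_imp_orthogonal_continuous[OF L D _ orth cont zero])
  moreover have "(LINT x|lborel. D x * cnj (g x)) = 0"
    unfolding g_def integral_mult_cnj_exp_series[OF sa D] using orth by simp
  moreover obtain M where "\<And>x. norm (\<phi> x) \<le> M"
    using continuous_vanishing_outside_bounded[OF cont zero] by blast
  then have "integrable lborel (\<lambda>x. D x * cnj (\<phi> x))"
    by (rule integrable_mult_cnj_bounded[OF D cont])
  moreover have "integrable lborel (\<lambda>x. D x * cnj (g x))"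
    unfolding g_def by (rule integrable_mult_cnj_exp_series[OF sa D])
  moreover have "D x * cnj (D x) = D x * cnj (\<phi> x) - D x * cnj (g x)" for x
    by (cases "x \<in> I") (simp_all add: D_def algebra_simps)
  ultimately have "integrable lborel (\<lambda>x. D x * cnj (D x))" "(LINT x|lborel. D x * cnj (D x)) = 0"
    by simp_all
  then have "AE x in lborel. D x = 0" by (rule integral_mult_cnj_self_eq_0_AE)
  then show ?thesis by eventually_elim (auto simp: D_def g_def I_def)
qed

lemma fourier_norm_le_L1_norm: "norm (fourier f \<zeta>) \<le> L1_norm f"
  unfolding fourier_def L1_norm_def
  using integral_norm_bound[of lborel "\<lambda>x. f x * cis (- 2 * pi * x * \<zeta>)"] by (simp add: norm_mult)

lemma abs_diff_rescale:
  fixes l x L \<xi> :: real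
  assumes "l > 0"
  shows "l * \<bar>x / L - \<xi>\<bar> = \<bar>x * (l / L) - l * \<xi>\<bar>"
proof -
  have "l * \<bar>x / L - \<xi>\<bar> = \<bar>l * (x / L - \<xi>)\<bar>" using assms by (simp add: abs_mult)
  then show ?thesis by (simp add: algebra_simps)
qed

lemma fourier_sample_le_lattice_decay:
  fixes \<phi> :: "real \<Rightarrow> complex" and l L \<xi> E N :: real
  assumes l: "l > 0" and L: "L > 0"
    and decay: "\<And>\<zeta>. 2/l \<le> \<bar>\<zeta> - \<xi>\<bar> \<Longrightarrow> norm (fourier \<phi> \<zeta>) \<le> E * sqrt l * (l * \<bar>\<zeta> - \<xi>\<bar>) powr (-N)"
    and far: "2 \<le> \<bar>of_int k * (l/L) - l * \<xi>\<bar>"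
  shows "norm (fourier \<phi> (of_int k / L)) \<le> E * sqrt l * lattice_decay (l/L) (l * \<xi>) N k"
  using decay[of "of_int k / L"] far l abs_diff_rescale[OF l, of "of_int k" L \<xi>]
  by (simp add: lattice_decay_def field_simps)

lemma finite_lattice_near:
  fixes s y :: real
  assumes s: "s > 0"
  shows "finite {k::int. \<bar>of_int k * s - y\<bar> < r}"
proof (rule finite_subset)
  show "{k::int. \<bar>of_int k * s - y\<bar> < r} \<subseteq> {\<lfloor>(y - r)/s\<rfloor>..\<lceil>(y + r)/s\<rceil>}"
  proof
    fix k :: int assume "k \<in> {k. \<bar>of_int k * s - y\<bar> < r}"
    then have "(y - r)/s < of_int k" "of_int k < (y + r)/s" using s by (auto simp: field_simps)
    then show "k \<in> {\<lfloor>(y - r)/s\<rfloor>..\<lceil>(y + r)/s\<rceil>}" by (simp add: floor_le_iff le_ceiling_iff)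
  qed
qed simp

lemma summable_fourier_samples:
  fixes \<phi> :: "real \<Rightarrow> complex" and l L \<xi> E N :: real
  assumes l: "l > 0" and L: "3 * l \<le> L" and N: "N \<ge> 2"
    and decay: "\<And>\<zeta>. 2/l \<le> \<bar>\<zeta> - \<xi>\<bar> \<Longrightarrow> norm (fourier \<phi> \<zeta>) \<le> E * sqrt l * (l * \<bar>\<zeta> - \<xi>\<bar>) powr (-N)"
  shows "summable (\<lambda>n. norm (fourier \<phi> (of_int (int_decode n) / L)))"
proof -
  define s where "s = l / L"
  define near where "near n \<longleftrightarrow> \<bar>of_int (int_decode n) * s - l * \<xi>\<bar> < 2" for n
  have s: "0 < s" "s \<le> 1/3" using l L by (simp_all add: s_def field_simps)
  have "finite (int_decode -` {k. \<bar>of_int k * s - l * \<xi>\<bar> < 2})"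
    using finite_lattice_near[OF s(1)] by (rule finite_vimageI) (simp add: inj_int_decode)
  then have "summable (\<lambda>n. if near n then L1_norm \<phi> else 0)"
    by (intro summable_If_finite) (simp add: near_def vimage_def)
  moreover have "summable (\<lambda>n. E * sqrt l * lattice_decay s (l * \<xi>) N (int_decode n))"
    using summable_lattice_decay(1)[OF s N] by (rule summable_mult)
  ultimately have sg: "summable (\<lambda>n. E * sqrt l * lattice_decay s (l * \<xi>) N (int_decode n)
      + (if near n then L1_norm \<phi> else 0))"
    by (rule summable_add[rotated])
  have "norm (fourier \<phi> (of_int (int_decode n) / L))
      \<le> E * sqrt l * lattice_decay s (l * \<xi>) N (int_decode n) + (if near n then L1_norm \<phi> else 0)" for n
    using fourier_sample_le_lattice_decay[OF l _ decay] fourier_norm_le_L1_norm[of \<phi>] l L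
    by (auto simp: near_def s_def lattice_decay_def not_less)
  then show ?thesis by (intro summable_comparison_test'[OF sg, of 0]) simp
qed

lemma integral_mult_cnj_eq_fourier_sum:
  fixes \<phi> h :: "real \<Rightarrow> complex" and L c0 :: real
  defines "a \<equiv> \<lambda>n. fourier \<phi> (of_int (int_decode n) / L) / L"
  assumes L: "L > 0" and cont: "\<And>x. isCont \<phi> x" and zero: "\<And>x. L/3 < \<bar>x - c0\<bar> \<Longrightarrow> \<phi> x = 0"
    and sa: "summable (\<lambda>n. norm (a n))"
    and h: "integrable lborel h" and h0: "\<And>x. x \<notin> {c0 - L/2..c0 + L/2} \<Longrightarrow> h x = 0"
  shows "(LINT x|lborel. h x * cnj (\<phi> x))
    = (\<Sum>n. cnj (a n) * fourier h (of_int (int_decode n) / L))"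
proof -
  define g where "g x = (\<Sum>n. a n * cis (2*pi/L * of_int (int_decode n) * x))" for x
  have "AE x in lborel. x \<in> {c0 - L/2..c0 + L/2} \<longrightarrow> \<phi> x = g x"
    using fourier_series_AE_eq[OF L cont zero] sa unfolding a_def g_def by simp
  then have "AE x in lborel. h x * cnj (\<phi> x) = h x * cnj (g x)"
    by (rule eventually_mono) (metis h0 mult_zero_left)
  moreover obtain M where "\<And>x. norm (\<phi> x) \<le> M"
    using continuous_vanishing_outside_bounded[OF cont zero] by blast
  then have "integrable lborel (\<lambda>x. h x * cnj (\<phi> x))"
    by (rule integrable_mult_cnj_bounded[OF h cont])
  moreover have "integrable lborel (\<lambda>x. h x * cnj (g x))"
    unfolding g_def by (rule integrable_mult_cnj_exp_series[OF sa h])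
  ultimately have "(LINT x|lborel. h x * cnj (\<phi> x)) = (LINT x|lborel. h x * cnj (g x))"
    by (intro integral_cong_AE) (simp_all add: borel_measurable_integrable)
  also have "\<dots> = (\<Sum>n. cnj (a n) * fourier h (of_int (int_decode n) / L))"
    unfolding g_def integral_mult_cnj_exp_series[OF sa h] fourier_def
    by (simp add: cis_cnj mult_ac)
  finally show ?thesis .
qed

lemma norm_inner_L2_scale_right:
  assumes "c \<ge> 0"
  shows "norm (inner_L2 h (\<lambda>x. complex_of_real c * \<phi> x)) = c * norm (LINT x|lborel. h x * cnj (\<phi> x))"
proof -
  have "(\<lambda>x. h x * cnj (complex_of_real c * \<phi> x)) = (\<lambda>x. complex_of_real c * (h x * cnj (\<phi> x)))"
    by (simp add: fun_eq_iff mult_ac)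
  then show ?thesis unfolding inner_L2_def using assms by (simp add: norm_mult)
qed

lemma inner_bound_of_fourier_vanishing_near:
  fixes \<phi> h :: "real \<Rightarrow> complex" and l U c0 \<xi> E N :: real
  assumes l: "l > 0" and U: "U \<ge> 1" and N: "N \<ge> 2" and E: "E \<ge> 0"
    and cont: "\<And>x. isCont \<phi> x" and \<phi>0: "\<And>x. U * l / 2 < \<bar>x - c0\<bar> \<Longrightarrow> \<phi> x = 0"
    and decay: "\<And>\<zeta>. 2/l \<le> \<bar>\<zeta> - \<xi>\<bar> \<Longrightarrow> norm (fourier \<phi> \<zeta>) \<le> E * sqrt l * (l * \<bar>\<zeta> - \<xi>\<bar>) powr (-N)"
    and h: "integrable lborel h" and h0: "\<And>x. 3 * U * l / 2 < \<bar>x - c0\<bar> \<Longrightarrow> h x = 0"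
    and hz: "\<And>k::int. \<bar>of_int k / (3 * U * l) - \<xi>\<bar> < 2/l \<Longrightarrow> fourier h (of_int k / (3 * U * l)) = 0"
  shows "norm (inner_L2 h (\<lambda>x. complex_of_real (sqrt l) * \<phi> x)) \<le> 2 * E * L1_norm h"
proof -
  define L where "L = 3 * U * l"
  define s where "s = l / L"
  define a where "a n = fourier \<phi> (of_int (int_decode n) / L) / L" for n
  define c where "c = E * sqrt l / L * L1_norm h"
  define v where "v n = c * lattice_decay s (l * \<xi>) N (int_decode n)" for n
  have L: "L > 0" "3 * l \<le> L" and s: "0 < s" "s \<le> 1/3"
    using l U by (simp_all add: L_def s_def field_simps)
  have sa: "summable (\<lambda>n. norm (a n))"
    using summable_fourier_samples[OF l L(2) N decay] L by (simp add: a_def norm_divide summable_divide)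
  have series: "(LINT x|lborel. h x * cnj (\<phi> x)) = (\<Sum>n. cnj (a n) * fourier h (of_int (int_decode n) / L))"
    unfolding a_def
  proof (rule integral_mult_cnj_eq_fourier_sum[OF L(1) cont _ sa[unfolded a_def] h])
    show "\<phi> x = 0" if "L/3 < \<bar>x - c0\<bar>" for x
      using that mult_pos_pos[OF _ l, of U] U by (intro \<phi>0) (simp add: L_def)
    show "h x = 0" if "x \<notin> {c0 - L/2..c0 + L/2}" for x
      using that by (intro h0) (auto simp: L_def abs_if)
  qed
  have c: "c \<ge> 0" using E L l by (simp add: c_def L1_norm_def)
  then have v_nonneg: "v n \<ge> 0" for n by (simp add: v_def lattice_decay_nonneg)
  have summand_le: "norm (cnj (a n) * fourier h (of_int (int_decode n) / L)) \<le> v n" for n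
  proof (cases "2 \<le> \<bar>of_int (int_decode n) * s - l * \<xi>\<bar>")
    case True
    then have "norm (a n) \<le> E * sqrt l / L * lattice_decay s (l * \<xi>) N (int_decode n)"
      using fourier_sample_le_lattice_decay[OF l L(1) decay] L
      by (simp add: a_def s_def norm_divide divide_right_mono)
    then have "norm (a n) * norm (fourier h (of_int (int_decode n) / L))
        \<le> E * sqrt l / L * lattice_decay s (l * \<xi>) N (int_decode n) * L1_norm h"
      using fourier_norm_le_L1_norm[of h] E L l lattice_decay_nonneg by (intro mult_mono) auto
    then show ?thesis by (simp add: v_def c_def norm_mult mult_ac)
  next
    case False
    then have "\<bar>of_int (int_decode n) / L - \<xi>\<bar> < 2/l"
      using abs_diff_rescale[OF l, of "of_int (int_decode n)" L \<xi>] l by (simp add: s_def field_simps)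
    then show ?thesis using hz v_nonneg by (simp add: L_def)
  qed
  have v: "summable v"
    unfolding v_def by (rule summable_mult[OF summable_lattice_decay(1)[OF s N]])
  have summable_norm_summands: "summable (\<lambda>n. norm (cnj (a n) * fourier h (of_int (int_decode n) / L)))"
    by (rule summable_comparison_test'[OF v, of 0]) (simp add: summand_le)
  have "norm (inner_L2 h (\<lambda>x. complex_of_real (sqrt l) * \<phi> x))
      = sqrt l * norm (LINT x|lborel. h x * cnj (\<phi> x))"
    by (rule norm_inner_L2_scale_right) (use l in simp)
  also have "norm (LINT x|lborel. h x * cnj (\<phi> x))
      \<le> (\<Sum>n. norm (cnj (a n) * fourier h (of_int (int_decode n) / L)))"
    unfolding series by (rule summable_norm[OF summable_norm_summands])
  also have "\<dots> \<le> suminf v"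
    by (rule suminf_le[OF summand_le summable_norm_summands v])
  also have "suminf v = c * (\<Sum>n. lattice_decay s (l * \<xi>) N (int_decode n))"
    unfolding v_def by (rule suminf_mult[OF summable_lattice_decay(1)[OF s N]])
  also have "\<dots> \<le> c * (2 / s)"
    by (rule mult_left_mono[OF summable_lattice_decay(2)[OF s N] c])
  also have "sqrt l * (c * (2 / s)) = 2 * E * L1_norm h"
    using l L by (simp add: c_def s_def field_simps)
  finally show ?thesis using l by (simp add: mult_left_mono)
qed

section \<open>Intervals and supports\<close>

lemma ilen_pos: "bdd_interval I \<Longrightarrow> 0 < ilen I"
  by (simp add: bdd_interval_def ilen_def)

lemma abs_diff_icenter_le:
  assumes "bdd_interval I" "x \<in> I"
  shows "\<bar>x - icenter I\<bar> \<le> ilen I / 2"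
proof -
  have "Inf I \<le> x" "x \<le> Sup I"
    using assms by (auto simp: bdd_interval_def intro: cInf_lower cSup_upper
        bounded_imp_bdd_below bounded_imp_bdd_above)
  then show ?thesis by (simp add: icenter_def ilen_def abs_le_iff field_simps)
qed

lemma abs_diff_icenter_le_of_iscale: "x \<in> iscale c I \<Longrightarrow> \<bar>x - icenter I\<bar> \<le> c * ilen I / 2"
  unfolding iscale_def atLeastAtMost_iff abs_le_iff by linarith

lemma notin_iscale: "c * ilen I / 2 < \<bar>x - icenter I\<bar> \<Longrightarrow> x \<notin> iscale c I"
  using abs_diff_icenter_le_of_iscale[of x c I] by linarith

lemma notin_iscale_5_imp_far:
  assumes "bdd_interval I" "\<xi> \<in> I" "\<zeta> \<notin> iscale 5 I"
  shows "2 * ilen I \<le> \<bar>\<zeta> - \<xi>\<bar>"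
proof -
  have "5 * ilen I / 2 < \<bar>\<zeta> - icenter I\<bar>"
    using assms(3) unfolding iscale_def atLeastAtMost_iff by linarith
  then show ?thesis using abs_diff_icenter_le[OF assms(1,2)] by linarith
qed

lemma notin_supp_imp_eq_0: "x \<notin> supp f \<Longrightarrow> f x = 0"
  unfolding supp_def using closure_subset[of "{x. f x \<noteq> 0}"] by auto

lemma smooth_imp_isCont:
  assumes "smooth f"
  shows "isCont f x"
proof -
  have "vderiv_iter 0 f differentiable at x" using assms unfolding smooth_def by blast
  then show ?thesis by (simp add: differentiable_imp_continuous_within)
qed

lemma inner_product_bound:
  fixes \<phi> h :: "real \<Rightarrow> complex" and J \<omega> :: "real set" and U \<xi> E N :: real
  assumes J: "bdd_interval J" and U: "U \<ge> 1" and N: "N \<ge> 2" and E: "E \<ge> 0"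
    and \<omega>: "bdd_interval \<omega>" "ilen \<omega> = 1 / ilen J" "\<xi> \<in> \<omega>"
    and \<phi>: "smooth \<phi>" "supp \<phi> \<subseteq> iscale U J"
    and decay: "\<forall>\<zeta>. \<bar>\<zeta> - \<xi>\<bar> \<ge> 2 / ilen J \<longrightarrow>
      norm (fourier \<phi> \<zeta>) \<le> E * sqrt (ilen J) * (ilen J * \<bar>\<zeta> - \<xi>\<bar>) powr (- N)"
    and h: "integrable lborel h" "\<forall>x. x \<notin> iscale (3 * U) J \<longrightarrow> h x = 0"
    and hz: "\<forall>\<zeta> \<in> iscale 5 \<omega>. (\<exists>k::int. \<zeta> = of_int k / (3 * U * ilen J)) \<longrightarrow> fourier h \<zeta> = 0"
  shows "norm (inner_L2 h (\<lambda>x. complex_of_real (sqrt (ilen J)) * \<phi> x)) \<le> 2 * E * L1_norm h"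
proof (rule inner_bound_of_fourier_vanishing_near[OF ilen_pos[OF J] U N E smooth_imp_isCont[OF \<phi>(1)]])
  show "\<phi> x = 0" if "U * ilen J / 2 < \<bar>x - icenter J\<bar>" for x
    using notin_iscale[OF that] \<phi>(2) notin_supp_imp_eq_0 by blast
  show "h x = 0" if "3 * U * ilen J / 2 < \<bar>x - icenter J\<bar>" for x
    using notin_iscale[OF that] h(2) by blast
  show "fourier h (of_int k / (3 * U * ilen J)) = 0" if "\<bar>of_int k / (3 * U * ilen J) - \<xi>\<bar> < 2 / ilen J" for k :: int
  proof -
    have "of_int k / (3 * U * ilen J) \<in> iscale 5 \<omega>"
    proof (rule ccontr)
      assume "of_int k / (3 * U * ilen J) \<notin> iscale 5 \<omega>"
      then have "2 * ilen \<omega> \<le> \<bar>of_int k / (3 * U * ilen J) - \<xi>\<bar>"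
        by (rule notin_iscale_5_imp_far[OF \<omega>(1,3)])
      with that \<omega>(2) show False by simp
    qed
    then show ?thesis using hz by blast
  qed
  show "norm (fourier \<phi> \<zeta>) \<le> E * sqrt (ilen J) * (ilen J * \<bar>\<zeta> - \<xi>\<bar>) powr (- N)"
    if "2 / ilen J \<le> \<bar>\<zeta> - \<xi>\<bar>" for \<zeta>
    using decay that by blast
qed (rule h(1))

theorem mainTheorem13:
  fixes B N :: real
  assumes "B > 0" and "N \<ge> 2"
  shows "\<exists>C. \<forall>(u :: real \<Rightarrow> real) (K :: real) (a :: real) (J :: real set) (\<xi>J :: real)
              (\<omega>J :: real set) (\<phi>J :: real \<Rightarrow> complex) (h :: real \<Rightarrow> complex).
    mono_on {0..} u \<and> (\<forall>t\<ge>0. u t > 0) \<and> u K \<ge> 1 \<and>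
    K \<ge> 1 \<and> a > 0 \<and> bdd_interval J \<and>
    bdd_interval \<omega>J \<and> ilen \<omega>J = 1 / ilen J \<and> \<xi>J \<in> \<omega>J \<and>
    smooth \<phi>J \<and> supp \<phi>J \<subseteq> iscale (u K) J \<and>
    (\<forall>\<zeta>. \<bar>\<zeta> - \<xi>J\<bar> \<ge> 2 / ilen J \<longrightarrow>
        norm (fourier \<phi>J \<zeta>) \<le> B * exp (- a * K / 12) * sqrt (ilen J)
                                  * (ilen J * \<bar>\<zeta> - \<xi>J\<bar>) powr (- N)) \<and>
    integrable lborel h \<and> (\<forall>x. x \<notin> iscale (3 * u K) J \<longrightarrow> h x = 0) \<and>
    (\<forall>\<zeta> \<in> iscale 5 \<omega>J. (\<exists>k::int. \<zeta> = of_int k / (3 * u K * ilen J)) \<longrightarrow> fourier h \<zeta> = 0)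
    \<longrightarrow> norm (inner_L2 h (\<lambda>x. complex_of_real (sqrt (ilen J)) * \<phi>J x))
          \<le> C * exp (- a * K / 12) * L1_norm h"
proof -
  have "0 \<le> B * exp (- a * K / 12)" for a K :: real using assms(1) by simp
  then show ?thesis
    by (intro exI[of _ "2 * B"] allI impI, elim conjE, subst mult.assoc[of 2 B])
      (rule inner_product_bound; (assumption | rule assms(2))?)
qed

end
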